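(* Let $\Delta=\{z\in\mathbb{C}:|z|<1\}$, let $\beta\in\mathbb{C}$ with $\mathrm{Re}\{\beta\}>-1/2$ and set $\gamma=\bar\beta/(1+\beta)$. Let $f(z)=z|z|^{2\beta}h(z)\overline{g(z)}$ be a log-harmonic mapping in $\Delta$, where $h,g$ are analytic in $\Delta$, $h(0)\neq0$, $g(0)=1$. Then for all $z\in\Delta$, $$\frac{(1-|\gamma|^2)(1-|z|^2)}{(1+|\gamma||z|)^2}|f_z|^2\le J_f(z)\le\begin{cases}\dfrac{(1-|\gamma|^2)(1-|z|^2)}{(1-|\gamma||z|)^2}|f_z|^2, & |z|<|\gamma|,\\[2mm] |f_z|^2, & |z|\ge|\gamma|.\end{cases}$$
   Context: A mapping $f$ is log-harmonic in $\Delta$ if there is an analytic $w$ in $\Delta$ with $|w(z)|<1$ (the second complex dilatation of $f$) such that $\overline{f_{\bar z}}/\overline{f}=w\,f_z/f$. The Jacobian of such $f$ is $J_f(z)=|f_z|^2(1-|w(z)|^2)$. *)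

theory Defs
  imports "HOL-Analysis.Analysis"
begin

definition wirt_z :: "(complex \<Rightarrow> complex) \<Rightarrow> complex \<Rightarrow> complex" where
  "wirt_z f z = (frechet_derivative f (at z) 1 - \<i> * frechet_derivative f (at z) \<i>) / 2"

definition wirt_zbar :: "(complex \<Rightarrow> complex) \<Rightarrow> complex \<Rightarrow> complex" where
  "wirt_zbar f z = (frechet_derivative f (at z) 1 + \<i> * frechet_derivative f (at z) \<i>) / 2"

definition jacobian_c :: "(complex \<Rightarrow> complex) \<Rightarrow> complex \<Rightarrow> real" where
  "jacobian_c f z = (cmod (wirt_z f z))\<^sup>2 - (cmod (wirt_zbar f z))\<^sup>2"

definition log_harmonic_dil :: "complex set \<Rightarrow> (complex \<Rightarrow> complex) \<Rightarrow> (complex \<Rightarrow> complex) \<Rightarrow> bool" where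
  "log_harmonic_dil S f w \<longleftrightarrow>
     w holomorphic_on S \<and> (\<forall>z\<in>S. cmod (w z) < 1) \<and>
     (\<forall>z\<in>S. f z \<noteq> 0 \<longrightarrow> f differentiable (at z) \<and>
        cnj (wirt_zbar f z) / cnj (f z) = w z * wirt_z f z / f z)"

definition log_harmonic_on :: "complex set \<Rightarrow> (complex \<Rightarrow> complex) \<Rightarrow> bool" where
  "log_harmonic_on S f \<longleftrightarrow> (\<exists>w. log_harmonic_dil S f w)"

end

(* At z <> 0 the Wirtinger derivatives of f = z |z|^(2 beta) h conj(g) are explicit, and the
   log-harmonic equation becomes the holomorphic identity
   h (conj(beta) g + z g') = w g ((1 + beta) h + z h'),
   which analytic continuation extends to the whole disc. It gives |f_zbar| = |w| |f_z|, hence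
   J_f = |f_z|^2 (1 - |w|^2); at z = 0 this also holds, because differentiability forces
   f_zbar(0) = 0, and f_z(0) = 0 unless beta = 0 (t^(2 beta) has no nonzero limit as t -> 0+).
   At z = 0 the identity yields w(0) = gamma, and the Schwarz-Pick lemma for w bounds
   1 - |w(z)|^2 between the two distortion factors. *)

theory Submission
  imports Defs "HOL-Complex_Analysis.Complex_Analysis"
begin

lemma tendsto_ray_difference_quotient:
  fixes f :: "'a::real_normed_vector \<Rightarrow> 'b::real_normed_vector"
  assumes "(f has_derivative L) (at x)"
  shows "((\<lambda>t. (f (x + t *\<^sub>R v) - f x) /\<^sub>R t) \<longlongrightarrow> L v) (at_right 0)"
proof -
  have lin: "linear L" using assms by (rule has_derivative_linear)
  have "((\<lambda>t. x + t *\<^sub>R v) has_derivative (\<lambda>s. s *\<^sub>R v)) (at_right 0)"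
    by (auto intro!: derivative_eq_intros)
  moreover have "(f has_derivative L) (at (x + 0 *\<^sub>R v))" using assms by simp
  ultimately have "((\<lambda>t. f (x + t *\<^sub>R v)) has_derivative (\<lambda>s. s *\<^sub>R L v)) (at_right 0)"
    using has_derivative_compose linear_scale[OF lin] by fastforce
  then have "((\<lambda>t. (f (x + t *\<^sub>R v) - f x) /\<^sub>R t - L v) \<longlongrightarrow> 0) (at_right 0)"
    unfolding has_derivative_within
    by (rule Lim_transform_eventually[OF conjunct2])
      (auto simp: eventually_at_filter divide_inverse_commute algebra_simps)
  then show ?thesis by (simp add: LIM_zero_iff)
qed

lemma exp_neq_1_if_norm_less_2pi:
  fixes x :: complex
  assumes "x \<noteq> 0" and "cmod x < 2 * pi"
  shows "exp x \<noteq> 1"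
proof
  assume "exp x = 1"
  then obtain n :: int where re: "Re x = 0" and im: "Im x = of_int (2 * n) * pi"
    unfolding exp_eq_1 by blast
  have "n \<noteq> 0" using assms(1) re im by (auto simp: complex_eq_iff)
  then have "2 * pi \<le> \<bar>of_int (2 * n) * pi\<bar>" by (auto simp: abs_mult)
  also have "\<dots> = cmod x" using cmod_eq_Im[OF re] im by simp
  finally show False using assms(2) by simp
qed

lemma tendsto_of_real_powr_at_right_0_imp_zero:
  fixes a c :: complex
  assumes lim: "((\<lambda>t. of_real t powr a) \<longlongrightarrow> c) (at_right 0)" and "a \<noteq> 0"
  shows "c = 0"
proof -
  \<comment> \<open>Rescaling t by k > 0 multiplies t powr a by k powr a, so k powr a * c = c; pick k with k powr a \<noteq> 1.\<close>
  define k where "k = exp (1 / cmod a)"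
  have k: "k > 0" unfolding k_def by simp
  have "filterlim (\<lambda>t. k * t) (at_right 0) (at_right (0::real))"
    using k by (intro filterlim_at_withinI) (auto intro!: tendsto_eq_intros simp: eventually_at_filter)
  then have "((\<lambda>t. of_real (k * t) powr a) \<longlongrightarrow> c) (at_right 0)"
    by (rule filterlim_compose[OF lim])
  moreover have "\<forall>\<^sub>F t in at_right 0. of_real (k * t) powr a = of_real k powr a * of_real t powr a"
    using k by (auto simp: eventually_at_filter powr_times_real)
  ultimately have "((\<lambda>t. of_real k powr a * of_real t powr a) \<longlongrightarrow> c) (at_right 0)"
    by (rule Lim_transform_eventually)
  moreover have "((\<lambda>t. of_real k powr a * of_real t powr a) \<longlongrightarrow> of_real k powr a * c) (at_right 0)"
    using lim by (rule tendsto_mult_left)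
  ultimately have "of_real k powr a * c = c"
    using tendsto_unique[OF trivial_limit_at_right_real] by blast
  moreover have "of_real k powr a = exp (a / of_real (cmod a))"
    using k unfolding k_def by (simp add: powr_def Ln_of_real)
  moreover have "exp (a / of_real (cmod a)) \<noteq> 1"
    using \<open>a \<noteq> 0\<close> pi_gt3 by (intro exp_neq_1_if_norm_less_2pi) (auto simp: norm_divide)
  ultimately show "c = 0" by (metis mult_cancel_right2)
qed

lemma has_derivative_cmod_powr:
  fixes z c :: complex
  assumes "z \<noteq> 0"
  shows "((\<lambda>x. of_real (cmod x) powr c) has_derivative
     (\<lambda>v. of_real (cmod z) powr c * c * ((v / z + cnj v / cnj z) / 2))) (at z)"
proof -
  have "cmod z \<noteq> 0" using assms by simp
  have re: "(sgn z \<bullet> v) / cmod z = Re (v / z)" for v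
  proof -
    have "cmod z * cmod z = Re z * Re z + Im z * Im z"
      using cmod_power2[of z] by (simp add: power2_eq_square)
    then show ?thesis using \<open>cmod z \<noteq> 0\<close>
      by (simp add: sgn_div_norm inner_complex_def Re_divide power2_eq_square field_simps)
  qed
  have "((\<lambda>x. c * of_real (ln (cmod x))) has_derivative
      (\<lambda>v. c * of_real ((sgn z \<bullet> v) / cmod z))) (at z)"
    using has_derivative_norm[OF assms] \<open>cmod z \<noteq> 0\<close>
    by (auto intro!: derivative_eq_intros simp: inner_commute divide_inverse)
  then have "((\<lambda>x. c * of_real (ln (cmod x))) has_derivative (\<lambda>v. c * of_real (Re (v / z)))) (at z)"
    unfolding re .
  moreover have "(exp has_derivative (\<lambda>u. exp (c * of_real (ln (cmod z))) * u)) (at (c * of_real (ln (cmod z))))"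
    using DERIV_exp by (simp add: has_field_derivative_def)
  ultimately have "((\<lambda>x. exp (c * of_real (ln (cmod x)))) has_derivative
      (\<lambda>v. exp (c * of_real (ln (cmod z))) * (c * of_real (Re (v / z))))) (at z)"
    by (rule has_derivative_compose)
  moreover have "exp (c * of_real (ln (cmod z))) * (c * of_real (Re (v / z)))
      = of_real (cmod z) powr c * c * ((v / z + cnj v / cnj z) / 2)" for v
    using assms complex_add_cnj[of "v / z"] by (simp add: powr_def Ln_of_real mult.commute)
  ultimately have "((\<lambda>x. exp (c * of_real (ln (cmod x)))) has_derivative
      (\<lambda>v. of_real (cmod z) powr c * c * ((v / z + cnj v / cnj z) / 2))) (at z)"
    by simp
  then show ?thesis
    by (rule has_derivative_transform_within_open[where s = "- {0}"])
      (use assms in \<open>auto simp: powr_def Ln_of_real\<close>)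
qed

lemma wirtinger_derivatives_eqI:
  assumes "(f has_derivative (\<lambda>v. A * v + B * cnj v)) (at z)"
  shows "wirt_z f z = A" and "wirt_zbar f z = B"
  using frechet_derivative_at[OF assms, symmetric]
  by (simp_all add: wirt_z_def wirt_zbar_def algebra_simps)

lemma jacobian_c_eq_dilatation:
  assumes "cmod (wirt_zbar f z) = cmod a * cmod (wirt_z f z)"
  shows "jacobian_c f z = (cmod (wirt_z f z))\<^sup>2 * (1 - (cmod a)\<^sup>2)"
  unfolding jacobian_c_def assms by (simp add: power_mult_distrib algebra_simps)

lemma distortion_lower_bound_real:
  fixes a p r D :: real
  assumes "0 \<le> a" "0 \<le> p" "p \<le> r" "r \<le> 1" "0 < D" "D \<le> 1 + a * p"
  shows "(1 - r\<^sup>2) / (1 + a * r)\<^sup>2 \<le> (1 - p\<^sup>2) / D\<^sup>2"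
proof -
  have "a * p \<le> a * r" using assms by (simp add: mult_left_mono)
  have "0 \<le> 1 - p\<^sup>2" using assms by (simp add: power_le_one)
  have "(1 - r\<^sup>2) / (1 + a * r)\<^sup>2 \<le> (1 - p\<^sup>2) / (1 + a * p)\<^sup>2"
    using assms \<open>a * p \<le> a * r\<close> \<open>0 \<le> 1 - p\<^sup>2\<close>
    by (intro frac_le power_mono) (auto simp: power_mono)
  also have "\<dots> \<le> (1 - p\<^sup>2) / D\<^sup>2"
    using assms \<open>0 \<le> 1 - p\<^sup>2\<close> by (intro divide_left_mono power_mono mult_pos_pos) auto
  finally show ?thesis .
qed

lemma distortion_upper_bound_real:
  fixes a p r D :: real
  assumes "0 \<le> p" "p \<le> r" "r < a" "a \<le> 1" "1 - a * p \<le> D"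
  shows "(1 - p\<^sup>2) / D\<^sup>2 \<le> (1 - r\<^sup>2) / (1 - a * r)\<^sup>2"
proof -
  have "a * r < 1"
    using assms mult_right_mono[of a 1 r] by simp
  moreover have "a * p \<le> a * r" using assms by (simp add: mult_left_mono)
  ultimately have "a * p < 1" by simp
  have "0 \<le> 1 - p\<^sup>2" using assms by (simp add: power_le_one)
  then have "(1 - p\<^sup>2) / D\<^sup>2 \<le> (1 - p\<^sup>2) / (1 - a * p)\<^sup>2"
    using assms \<open>a * p < 1\<close> by (intro divide_left_mono power_mono mult_pos_pos) auto
  also have "\<dots> \<le> (1 - r\<^sup>2) / (1 - a * r)\<^sup>2"
  proof -
    have "(1 - r\<^sup>2) * (1 - a * p)\<^sup>2 - (1 - p\<^sup>2) * (1 - a * r)\<^sup>2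
       = (r - p) * ((a - p) * (1 - a * r) + (a - r) * (1 - a * p))"
      by (simp add: power2_eq_square algebra_simps)
    moreover have "0 \<le> (r - p) * ((a - p) * (1 - a * r) + (a - r) * (1 - a * p))"
      using assms \<open>a * r < 1\<close> \<open>a * p < 1\<close> by (intro mult_nonneg_nonneg add_nonneg_nonneg) auto
    ultimately show ?thesis
      using \<open>a * r < 1\<close> \<open>a * p < 1\<close> by (simp add: divide_simps)
  qed
  finally show ?thesis .
qed

lemma Moebius_norm_identity:
  fixes a u :: complex
  shows "(cmod (1 - cnj a * u))\<^sup>2 - (cmod (u - a))\<^sup>2 = (1 - (cmod a)\<^sup>2) * (1 - (cmod u)\<^sup>2)"
  by (simp only: cmod_power2) (simp add: power2_eq_square algebra_simps)

lemma one_minus_norm_Moebius_function: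
  assumes "1 - cnj a * u \<noteq> 0"
  shows "1 - (cmod (Moebius_function 0 a u))\<^sup>2
    = (1 - (cmod a)\<^sup>2) * (1 - (cmod u)\<^sup>2) / (cmod (1 - cnj a * u))\<^sup>2"
  using assms Moebius_norm_identity[of a u]
  by (simp add: Moebius_function_def norm_mult norm_divide power_divide field_simps)

lemma Schwarz_Pick_bounds:
  fixes w :: "complex \<Rightarrow> complex" and z :: complex
  assumes holo: "w holomorphic_on ball 0 1" and disc: "\<And>z. z \<in> ball 0 1 \<Longrightarrow> cmod (w z) < 1"
    and z: "z \<in> ball 0 1"
  shows "(1 - (cmod (w 0))\<^sup>2) * (1 - (cmod z)\<^sup>2) / (1 + cmod (w 0) * cmod z)\<^sup>2 \<le> 1 - (cmod (w z))\<^sup>2"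
    and "cmod z < cmod (w 0) \<Longrightarrow>
      1 - (cmod (w z))\<^sup>2 \<le> (1 - (cmod (w 0))\<^sup>2) * (1 - (cmod z)\<^sup>2) / (1 - cmod (w 0) * cmod z)\<^sup>2"
proof -
  define \<gamma> where "\<gamma> = w 0"
  have \<gamma>: "cmod \<gamma> < 1" unfolding \<gamma>_def using disc by simp
  define F where "F = Moebius_function 0 \<gamma> \<circ> w"
  have "F holomorphic_on ball 0 1"
    unfolding F_def using holo disc Moebius_function_holomorphic[OF \<gamma>]
    by (intro holomorphic_on_compose_gen) auto
  moreover have "F 0 = 0" unfolding F_def \<gamma>_def by (simp add: Moebius_function_eq_zero)
  moreover have "cmod (F u) < 1" if "cmod u < 1" for u
    unfolding F_def using Moebius_function_norm_lt_1[OF \<gamma>] disc that by simp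
  ultimately have Fz: "cmod (F z) \<le> cmod z" using Schwarz_Lemma(1) z by auto
  have Fz1: "cmod (F z) < 1" using Fz z by simp
  have w: "w z = Moebius_function 0 (- \<gamma>) (F z)"
    unfolding F_def using Moebius_function_compose[of "-\<gamma>" \<gamma> "w z"] \<gamma> disc z by simp
  have "cmod (cnj \<gamma> * F z) < 1"
    using norm_mult_less[of "cnj \<gamma>" 1 "F z" 1] \<gamma> Fz1 by simp
  then have nz: "1 + cnj \<gamma> * F z \<noteq> 0"
    by (auto simp: add_eq_0_iff)
  define D where "D = cmod (1 + cnj \<gamma> * F z)"
  have key: "1 - (cmod (w z))\<^sup>2 = (1 - (cmod \<gamma>)\<^sup>2) * ((1 - (cmod (F z))\<^sup>2) / D\<^sup>2)"
    using one_minus_norm_Moebius_function[of "-\<gamma>" "F z"] nz unfolding w D_def by simp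
  have D_le: "D \<le> 1 + cmod \<gamma> * cmod (F z)"
    unfolding D_def using norm_triangle_ineq[of 1 "cnj \<gamma> * F z"] by (simp add: norm_mult)
  have D_ge: "1 - cmod \<gamma> * cmod (F z) \<le> D"
    unfolding D_def using norm_triangle_ineq2[of 1 "- (cnj \<gamma> * F z)"] by (simp add: norm_mult)
  have "0 \<le> 1 - (cmod \<gamma>)\<^sup>2" using \<gamma> by (simp add: power_le_one)
  show "(1 - (cmod (w 0))\<^sup>2) * (1 - (cmod z)\<^sup>2) / (1 + cmod (w 0) * cmod z)\<^sup>2 \<le> 1 - (cmod (w z))\<^sup>2"
    using mult_left_mono[OF distortion_lower_bound_real[OF _ _ Fz _ _ D_le] \<open>0 \<le> 1 - (cmod \<gamma>)\<^sup>2\<close>]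
      z nz key unfolding \<gamma>_def D_def by simp
  assume "cmod z < cmod (w 0)"
  then show "1 - (cmod (w z))\<^sup>2 \<le> (1 - (cmod (w 0))\<^sup>2) * (1 - (cmod z)\<^sup>2) / (1 - cmod (w 0) * cmod z)\<^sup>2"
    using mult_left_mono[OF distortion_upper_bound_real[OF _ Fz _ _ D_ge] \<open>0 \<le> 1 - (cmod \<gamma>)\<^sup>2\<close>]
      \<gamma> key unfolding \<gamma>_def by simp
qed

locale log_harmonic_factorization =
  fixes \<beta> :: complex and h g f :: "complex \<Rightarrow> complex"
  assumes h_holo: "h holomorphic_on ball 0 1" and g_holo: "g holomorphic_on ball 0 1"
    and h0: "h 0 \<noteq> 0" and g0: "g 0 = 1"
    and f_eq: "\<forall>\<zeta>\<in>ball 0 1. f \<zeta> = \<zeta> * of_real (cmod \<zeta>) powr (2 * \<beta>) * h \<zeta> * cnj (g \<zeta>)"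
begin

lemma has_derivative_f:
  assumes z: "z \<in> ball 0 1" "z \<noteq> 0"
  defines "E \<equiv> of_real (cmod z) powr (2 * \<beta>)"
  shows "(f has_derivative (\<lambda>v. (E * cnj (g z) * ((1 + \<beta>) * h z + z * deriv h z)) * v
      + (E * h z * (z / cnj z) * cnj (cnj \<beta> * g z + z * deriv g z)) * cnj v)) (at z)"
proof -
  have dh: "(h has_derivative (\<lambda>v. deriv h z * v)) (at z)"
    and dg: "(g has_derivative (\<lambda>v. deriv g z * v)) (at z)"
    using holomorphic_derivI[OF h_holo _ z(1)] holomorphic_derivI[OF g_holo _ z(1)]
    by (simp_all add: has_field_derivative_def)
  have "((\<lambda>x. x * of_real (cmod x) powr (2 * \<beta>) * h x * cnj (g x)) has_derivative
      (\<lambda>v. (E * cnj (g z) * ((1 + \<beta>) * h z + z * deriv h z)) * v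
      + (E * h z * (z / cnj z) * cnj (cnj \<beta> * g z + z * deriv g z)) * cnj v)) (at z)"
    using has_derivative_mult[OF has_derivative_mult[OF has_derivative_mult[OF
        has_derivative_ident has_derivative_cmod_powr[OF z(2), of "2 * \<beta>"]] dh] has_derivative_cnj[OF dg]]
    by (rule has_derivative_eq_rhs) (use z(2) in \<open>simp add: E_def fun_eq_iff field_simps\<close>)
  then show ?thesis
    by (rule has_derivative_transform_within_open[OF _ open_ball z(1)]) (simp add: f_eq)
qed

lemma wirtinger_f:
  assumes "z \<in> ball 0 1" "z \<noteq> 0"
  shows "wirt_z f z = of_real (cmod z) powr (2 * \<beta>) * cnj (g z) * ((1 + \<beta>) * h z + z * deriv h z)"
    and "wirt_zbar f z = of_real (cmod z) powr (2 * \<beta>) * h z * (z / cnj z) * cnj (cnj \<beta> * g z + z * deriv g z)"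
  using wirtinger_derivatives_eqI[OF has_derivative_f[OF assms]] by simp_all

lemma dilatation_identity_nonvanishing:
  assumes w: "log_harmonic_dil (ball 0 1) f w"
    and z: "z \<in> ball 0 1" "z \<noteq> 0" and hg: "h z \<noteq> 0" "g z \<noteq> 0"
  shows "h z * (cnj \<beta> * g z + z * deriv g z) = w z * (g z * ((1 + \<beta>) * h z + z * deriv h z))"
proof -
  define E where "E = of_real (cmod z) powr (2 * \<beta>)"
  define X where "X = cnj E * cnj (h z) * cnj z"
  have "E \<noteq> 0" unfolding E_def using z(2) by (simp add: powr_def)
  then have "X \<noteq> 0" unfolding X_def using z(2) hg by simp
  have f: "f z = z * E * h z * cnj (g z)" using f_eq z(1) unfolding E_def by simp
  then have "f z \<noteq> 0" using \<open>E \<noteq> 0\<close> z hg by simp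
  then have "cnj (wirt_zbar f z) / cnj (f z) = w z * (wirt_z f z / f z)"
    using w z(1) unfolding log_harmonic_dil_def by auto
  moreover have "cnj (wirt_zbar f z) = X * ((cnj \<beta> * g z + z * deriv g z) / z)"
    unfolding wirtinger_f[OF z] E_def[symmetric] X_def using z(2) by (simp add: field_simps)
  moreover have "cnj (f z) = X * g z" unfolding f X_def by simp
  moreover have "wirt_z f z / f z = ((1 + \<beta>) * h z + z * deriv h z) / (z * h z)"
    unfolding wirtinger_f[OF z] E_def[symmetric] f using \<open>E \<noteq> 0\<close> hg by simp
  ultimately have "(cnj \<beta> * g z + z * deriv g z) / (z * g z) = w z * (((1 + \<beta>) * h z + z * deriv h z) / (z * h z))"
    using \<open>X \<noteq> 0\<close> by (simp add: mult.assoc)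
  then have "z * (h z * (cnj \<beta> * g z + z * deriv g z) - w z * (g z * ((1 + \<beta>) * h z + z * deriv h z))) = 0"
    using z(2) hg by (simp add: field_simps)
  then show ?thesis using z(2) by simp
qed

lemma dilatation_identity:
  assumes w: "log_harmonic_dil (ball 0 1) f w" and u: "u \<in> ball 0 1"
  shows "h u * (cnj \<beta> * g u + u * deriv g u) = w u * (g u * ((1 + \<beta>) * h u + u * deriv h u))"
proof -
  define R where "R = (\<lambda>z. h z * (cnj \<beta> * g z + z * deriv g z) - w z * (g z * ((1 + \<beta>) * h z + z * deriv h z)))"
  have holo: "R holomorphic_on ball 0 1"
    unfolding R_def using h_holo g_holo w unfolding log_harmonic_dil_def
    by (intro holomorphic_intros holomorphic_deriv) auto
  have "isCont (\<lambda>z. h z * g z) 0"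
    using h_holo g_holo
    by (intro continuous_intros holomorphic_on_imp_continuous_on[THEN continuous_on_interior])
      (auto simp: interior_open)
  then have "\<forall>\<^sub>F z in at 0. h z * g z \<noteq> 0"
    using h0 g0 unfolding isCont_def by (intro tendsto_imp_eventually_ne) auto
  then obtain d where d: "d > 0" "\<And>z. z \<noteq> 0 \<Longrightarrow> dist z 0 < d \<Longrightarrow> h z * g z \<noteq> 0"
    unfolding eventually_at by auto
  define U where "U = ball 0 (min d 1) - {0::complex}"
  have "(0::complex) islimpt ball 0 (min d 1)" using d(1) by (simp add: islimpt_ball)
  then have lim: "0 islimpt U" unfolding U_def by (rule islimpt_punctured[THEN iffD1])
  have "U \<subseteq> ball 0 1" unfolding U_def by auto
  moreover have "R z = 0" if "z \<in> U" for z
    using dilatation_identity_nonvanishing[OF w] d that unfolding U_def R_def by auto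
  ultimately have "R u = 0"
    using analytic_continuation[OF holo open_ball connected_ball _ _ lim] u by auto
  then show ?thesis unfolding R_def by simp
qed

lemma dilatation_at_0:
  assumes "log_harmonic_dil (ball 0 1) f w" and "1 + \<beta> \<noteq> 0"
  shows "w 0 = cnj \<beta> / (1 + \<beta>)"
proof -
  have "cnj \<beta> * h 0 = ((1 + \<beta>) * w 0) * h 0"
    using dilatation_identity[OF assms(1), of 0] g0 by (simp add: algebra_simps)
  then have "cnj \<beta> = (1 + \<beta>) * w 0" using h0 by (rule mult_right_cancel[THEN iffD1, rotated])
  then show ?thesis using assms(2) by (simp add: eq_divide_eq mult.commute)
qed

lemma ray_limit_at_0:
  assumes L: "(f has_derivative L) (at 0)" and v: "cmod v = 1"
  shows "((\<lambda>t. of_real t powr (2 * \<beta>)) \<longlongrightarrow> L v / (v * h 0)) (at_right 0)"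
proof -
  define H where "H = (\<lambda>t::real. v * h (t *\<^sub>R v) * cnj (g (t *\<^sub>R v)))"
  have "\<forall>\<^sub>F t in at_right 0. (f (0 + t *\<^sub>R v) - f 0) /\<^sub>R t = of_real t powr (2 * \<beta>) * H t"
  proof -
    have "\<forall>\<^sub>F t in at_right (0::real). 0 < t \<and> t < 1"
      by (auto simp: eventually_at_right_field intro: exI[of _ 1])
    then show ?thesis
    proof eventually_elim
      case (elim t)
      then have "cmod (t *\<^sub>R v) = t" "t *\<^sub>R v \<in> ball 0 1" using v by auto
      then show ?case
        using f_eq elim unfolding H_def by (simp add: scaleR_conv_of_real field_simps)
    qed
  qed
  then have "((\<lambda>t. of_real t powr (2 * \<beta>) * H t) \<longlongrightarrow> L v) (at_right 0)"
    using Lim_transform_eventually tendsto_ray_difference_quotient[OF L] by fastforce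
  moreover have H: "(H \<longlongrightarrow> v * h 0) (at_right 0)"
  proof -
    have "isCont h 0" "isCont g 0"
      using h_holo g_holo
      by (auto intro!: holomorphic_on_imp_continuous_on[THEN continuous_on_interior] simp: interior_open)
    moreover have ray: "((\<lambda>t::real. t *\<^sub>R v) \<longlongrightarrow> 0) (at_right 0)"
      by (auto intro!: tendsto_eq_intros)
    ultimately have "((\<lambda>t. h (t *\<^sub>R v)) \<longlongrightarrow> h 0) (at_right 0)"
      and "((\<lambda>t. g (t *\<^sub>R v)) \<longlongrightarrow> g 0) (at_right 0)"
      by (auto intro: isCont_tendsto_compose[OF _ ray])
    then show ?thesis
      unfolding H_def using tendsto_mult[OF tendsto_mult[OF tendsto_const] tendsto_cnj] g0 by fastforce
  qed
  moreover have "v * h 0 \<noteq> 0" using v h0 by auto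
  ultimately have "((\<lambda>t. of_real t powr (2 * \<beta>) * H t / H t) \<longlongrightarrow> L v / (v * h 0)) (at_right 0)"
    by (rule tendsto_divide)
  moreover have "\<forall>\<^sub>F t in at_right 0. of_real t powr (2 * \<beta>) * H t / H t = of_real t powr (2 * \<beta>)"
    using tendsto_imp_eventually_ne[OF H \<open>v * h 0 \<noteq> 0\<close>] by eventually_elim simp
  ultimately show ?thesis by (rule Lim_transform_eventually)
qed

lemma wirtinger_at_0:
  assumes "f differentiable (at 0)"
  shows "wirt_zbar f 0 = 0" and "\<beta> \<noteq> 0 \<Longrightarrow> wirt_z f 0 = 0"
proof -
  obtain L where L: "(f has_derivative L) (at 0)"
    using assms unfolding differentiable_def by auto
  have "frechet_derivative f (at 0) = L" using frechet_derivative_at[OF L] by simp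
  moreover have "L 1 / (1 * h 0) = L \<i> / (\<i> * h 0)"
    using tendsto_unique[OF trivial_limit_at_right_real ray_limit_at_0[OF L, of 1] ray_limit_at_0[OF L, of \<i>]]
    by simp
  then have "L \<i> = \<i> * L 1" using h0 by (simp add: field_simps)
  ultimately have wirt: "wirt_zbar f 0 = 0" "wirt_z f 0 = L 1"
    unfolding wirt_zbar_def wirt_z_def by simp_all
  then show "wirt_zbar f 0 = 0" by simp
  assume "\<beta> \<noteq> 0"
  then have "L 1 / (1 * h 0) = 0"
    using ray_limit_at_0[OF L, of 1] by (intro tendsto_of_real_powr_at_right_0_imp_zero[of "2 * \<beta>"]) auto
  then show "wirt_z f 0 = 0" using wirt h0 by simp
qed

lemma norm_wirt_zbar_eq:
  assumes w: "log_harmonic_dil (ball 0 1) f w" and "1 + \<beta> \<noteq> 0"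
    and z: "z \<in> ball 0 1" and "f differentiable (at z)"
  shows "cmod (wirt_zbar f z) = cmod (w z) * cmod (wirt_z f z)"
proof (cases "z = 0")
  case True
  then show ?thesis
    using wirtinger_at_0 dilatation_at_0[OF w] assms by (cases "\<beta> = 0") auto
next
  case False
  define E where "E = of_real (cmod z) powr (2 * \<beta>)"
  have "cmod (z / cnj z) = 1" using False by (simp add: norm_divide)
  then have "cmod (wirt_zbar f z) = cmod E * cmod (h z * (cnj \<beta> * g z + z * deriv g z))"
    unfolding wirtinger_f[OF z False] E_def[symmetric] norm_mult complex_mod_cnj by simp
  also have "h z * (cnj \<beta> * g z + z * deriv g z) = w z * (g z * ((1 + \<beta>) * h z + z * deriv h z))"
    by (rule dilatation_identity[OF w z])
  also have "cmod E * cmod \<dots> = cmod (w z) * cmod (wirt_z f z)"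
    unfolding wirtinger_f[OF z False] E_def[symmetric] norm_mult complex_mod_cnj by simp
  finally show ?thesis .
qed

end

theorem mainTheorem5:
  fixes \<beta> :: complex and f h g :: "complex \<Rightarrow> complex" and z :: complex
  assumes "Re \<beta> > -1/2"
    and "h holomorphic_on ball 0 1" and "g holomorphic_on ball 0 1"
    and "h 0 \<noteq> 0" and "g 0 = 1"
    and "\<forall>\<zeta>\<in>ball 0 1. f \<zeta> = \<zeta> * (complex_of_real (cmod \<zeta>)) powr (2 * \<beta>) * h \<zeta> * cnj (g \<zeta>)"
    and "log_harmonic_on (ball 0 1) f"
    and "z \<in> ball 0 1" and "f differentiable (at z)"
  shows "(let \<gamma> = cnj \<beta> / (1 + \<beta>) in
           (1 - (cmod \<gamma>)\<^sup>2) * (1 - (cmod z)\<^sup>2) / (1 + cmod \<gamma> * cmod z)\<^sup>2 * (cmod (wirt_z f z))\<^sup>2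
             \<le> jacobian_c f z
           \<and> jacobian_c f z \<le>
             (if cmod z < cmod \<gamma>
              then (1 - (cmod \<gamma>)\<^sup>2) * (1 - (cmod z)\<^sup>2) / (1 - cmod \<gamma> * cmod z)\<^sup>2 * (cmod (wirt_z f z))\<^sup>2
              else (cmod (wirt_z f z))\<^sup>2))"
proof -
  interpret log_harmonic_factorization \<beta> h g f
    using assms(2-6) by unfold_locales
  obtain w where w: "log_harmonic_dil (ball 0 1) f w"
    using assms(7) unfolding log_harmonic_on_def by blast
  \<comment> \<open>Re beta > -1/2 only serves to make gamma well defined; |gamma| < 1 comes from |w 0| < 1.\<close>
  have "1 + \<beta> \<noteq> 0" using assms(1) by (auto simp: complex_eq_iff)
  have J: "jacobian_c f z = (cmod (wirt_z f z))\<^sup>2 * (1 - (cmod (w z))\<^sup>2)"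
    by (rule jacobian_c_eq_dilatation[OF norm_wirt_zbar_eq[OF w \<open>1 + \<beta> \<noteq> 0\<close> assms(8,9)]])
  have "w holomorphic_on ball 0 1" "\<And>z. z \<in> ball 0 1 \<Longrightarrow> cmod (w z) < 1"
    using w unfolding log_harmonic_dil_def by auto
  note bounds = Schwarz_Pick_bounds[OF this assms(8), unfolded dilatation_at_0[OF w \<open>1 + \<beta> \<noteq> 0\<close>]]
  have "0 \<le> (cmod (wirt_z f z))\<^sup>2" by simp
  then show ?thesis
    unfolding Let_def J using mult_left_mono[OF bounds(1)] mult_left_mono[OF bounds(2)]
    by (auto simp: mult.commute mult_left_le)
qed

end
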